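(* Let $n \ge 1$, let $\beta_w, \beta_n \in (0,1)$, and let $w_1, \dots, w_n \in \mathbb{R}_{\ge 0}$ with $W := \sum_{i=1}^n w_i \neq 0$. For a vector $t = (t_1,\dots,t_n) \in \mathbb{Z}_{\ge 0}^n$ with $T := \sum_{i=1}^n t_i$, the following are equivalent: (1) for every $S \subseteq [n]$ with $w(S) > \beta_w W$ we have $t(S) > \beta_n T$; (2) for every $S \subseteq [n]$ with $w(S) < (1-\beta_w) W$ we have $t(S) < (1-\beta_n) T$. Consequently, the Weight Qualification problem with parameters $(\beta_w, \beta_n, w_1,\dots,w_n)$ and the Weight Restriction problem with parameters $(1-\beta_w, 1-\beta_n, w_1,\dots,w_n)$ are identical (same feasible sets and same objective).
   Context: $[n] := \{1,\dots,n\}$; for $S \subseteq [n]$, $w(S) := \sum_{i \in S} w_i$ and $t(S) := \sum_{i\in S} t_i$. Weight Restriction with parameters $(\alpha_w,\alpha_n, w_1,\dots,w_n)$: find $t \in \mathbb{Z}_{\ge 0}^n$ minimizing $T$ subject to: for all $S\subseteq[n]$ with $w(S) < \alpha_w W$, $t(S) < \alpha_n T$. Weight Qualification with parameters $(\beta_w,\beta_n,w_1,\dots,w_n)$: find $t \in \mathbb{Z}_{\ge 0}^n$ minimizing $T$ subject to: for all $S \subseteq [n]$ with $w(S) > \beta_w W$, $t(S) > \beta_n T$. *)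

theory Defs
  imports Complex_Main
begin

(* Indices are [n] = {1..n}; w :: nat => real gives weights w_i, t :: nat => nat the
   nonnegative integer tickets t_i.  Values outside {1..n} are irrelevant. *)

definition wsum :: "(nat \<Rightarrow> real) \<Rightarrow> nat set \<Rightarrow> real" where
  "wsum w S = (\<Sum>i\<in>S. w i)"

definition tsum :: "(nat \<Rightarrow> nat) \<Rightarrow> nat set \<Rightarrow> real" where
  "tsum t S = real (\<Sum>i\<in>S. t i)"

definition wq_feasible :: "real \<Rightarrow> real \<Rightarrow> nat \<Rightarrow> (nat \<Rightarrow> real) \<Rightarrow> (nat \<Rightarrow> nat) \<Rightarrow> bool" where
  "wq_feasible bw bn n w t \<longleftrightarrow>
     (\<forall>S. S \<subseteq> {1..n} \<longrightarrow> wsum w S > bw * wsum w {1..n} \<longrightarrow> tsum t S > bn * tsum t {1..n})"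

definition wr_feasible :: "real \<Rightarrow> real \<Rightarrow> nat \<Rightarrow> (nat \<Rightarrow> real) \<Rightarrow> (nat \<Rightarrow> nat) \<Rightarrow> bool" where
  "wr_feasible aw an n w t \<longleftrightarrow>
     (\<forall>S. S \<subseteq> {1..n} \<longrightarrow> wsum w S < aw * wsum w {1..n} \<longrightarrow> tsum t S < an * tsum t {1..n})"

definition wq_optimal :: "real \<Rightarrow> real \<Rightarrow> nat \<Rightarrow> (nat \<Rightarrow> real) \<Rightarrow> (nat \<Rightarrow> nat) \<Rightarrow> bool" where
  "wq_optimal bw bn n w t \<longleftrightarrow> wq_feasible bw bn n w t \<and>
     (\<forall>t'. wq_feasible bw bn n w t' \<longrightarrow> tsum t {1..n} \<le> tsum t' {1..n})"

definition wr_optimal :: "real \<Rightarrow> real \<Rightarrow> nat \<Rightarrow> (nat \<Rightarrow> real) \<Rightarrow> (nat \<Rightarrow> nat) \<Rightarrow> bool" where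
  "wr_optimal aw an n w t \<longleftrightarrow> wr_feasible aw an n w t \<and>
     (\<forall>t'. wr_feasible aw an n w t' \<longrightarrow> tsum t {1..n} \<le> tsum t' {1..n})"

end

theory Submission
  imports Defs
begin

text \<open>Complementation \<open>S \<mapsto> [n] - S\<close> exchanges the two conditions: it turns
  \<open>w(S) > \<beta>\<^sub>w W\<close> into \<open>w([n] - S) < (1 - \<beta>\<^sub>w) W\<close> and \<open>t(S) > \<beta>\<^sub>n T\<close> into
  \<open>t([n] - S) < (1 - \<beta>\<^sub>n) T\<close>, because both weights and tickets are additive.
  No hypothesis on \<open>n\<close>, \<open>\<beta>\<^sub>w\<close>, \<open>\<beta>\<^sub>n\<close> or the weights is needed.\<close>

lemma wsum_Diff:
  assumes "finite A" "S \<subseteq> A"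
  shows "wsum w (A - S) = wsum w A - wsum w S"
  using assms by (simp add: wsum_def sum_diff finite_subset)

lemma tsum_Diff:
  assumes "finite A" "S \<subseteq> A"
  shows "tsum t (A - S) = tsum t A - tsum t S"
  using assms by (simp add: tsum_def of_nat_diff sum_mono2 sum_diff_nat finite_subset)

lemma qualification_iff_restriction_compl:
  fixes w :: "nat \<Rightarrow> real" and t :: "nat \<Rightarrow> nat" and bw bn :: real
  assumes "finite A"
  shows "(\<forall>S. S \<subseteq> A \<longrightarrow> wsum w S > bw * wsum w A \<longrightarrow> tsum t S > bn * tsum t A)
     \<longleftrightarrow> (\<forall>S. S \<subseteq> A \<longrightarrow> wsum w S < (1 - bw) * wsum w A \<longrightarrow> tsum t S < (1 - bn) * tsum t A)"
    (is "(\<forall>S. ?sub S \<longrightarrow> ?Qw S \<longrightarrow> ?Qt S) \<longleftrightarrow> (\<forall>S. ?sub S \<longrightarrow> ?Rw S \<longrightarrow> ?Rt S)")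
proof -
  have compl: "A - S \<subseteq> A" "A - (A - S) = S" if "S \<subseteq> A" for S
    using that by auto
  have w_swap: "?Rw (A - S) \<longleftrightarrow> ?Qw S" "?Qw (A - S) \<longleftrightarrow> ?Rw S" if "S \<subseteq> A" for S
    using wsum_Diff[OF assms that, where w=w] by (auto simp: algebra_simps)
  have t_swap: "?Rt (A - S) \<longleftrightarrow> ?Qt S" "?Qt (A - S) \<longleftrightarrow> ?Rt S" if "S \<subseteq> A" for S
    using tsum_Diff[OF assms that, where t=t] by (auto simp: algebra_simps)
  show ?thesis
  proof (intro iffI allI impI)
    fix S assume "\<forall>S. ?sub S \<longrightarrow> ?Qw S \<longrightarrow> ?Qt S" "S \<subseteq> A" "?Rw S"
    then show "?Rt S" using compl w_swap t_swap by metis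
  next
    fix S assume "\<forall>S. ?sub S \<longrightarrow> ?Rw S \<longrightarrow> ?Rt S" "S \<subseteq> A" "?Qw S"
    then show "?Qt S" using compl w_swap t_swap by metis
  qed
qed

lemma wq_feasible_iff_wr_feasible:
  "wq_feasible bw bn n w t \<longleftrightarrow> wr_feasible (1 - bw) (1 - bn) n w t"
  unfolding wq_feasible_def wr_feasible_def
  by (rule qualification_iff_restriction_compl) simp

lemma wq_optimal_iff_wr_optimal:
  "wq_optimal bw bn n w t \<longleftrightarrow> wr_optimal (1 - bw) (1 - bn) n w t"
  by (simp add: wq_optimal_def wr_optimal_def wq_feasible_iff_wr_feasible)

theorem theorem2:
  fixes n :: nat and bw bn :: real and w :: "nat \<Rightarrow> real" and t :: "nat \<Rightarrow> nat"
  assumes "n \<ge> 1"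
    and "0 < bw" "bw < 1" "0 < bn" "bn < 1"
    and "\<forall>i\<in>{1..n}. w i \<ge> 0"
    and "wsum w {1..n} \<noteq> 0"
  shows "((\<forall>S. S \<subseteq> {1..n} \<longrightarrow> wsum w S > bw * wsum w {1..n} \<longrightarrow> tsum t S > bn * tsum t {1..n})
          \<longleftrightarrow>
          (\<forall>S. S \<subseteq> {1..n} \<longrightarrow> wsum w S < (1 - bw) * wsum w {1..n} \<longrightarrow> tsum t S < (1 - bn) * tsum t {1..n}))
       \<and> (\<forall>t'. wq_feasible bw bn n w t' \<longleftrightarrow> wr_feasible (1 - bw) (1 - bn) n w t')
       \<and> (\<forall>t'. wq_optimal bw bn n w t' \<longleftrightarrow> wr_optimal (1 - bw) (1 - bn) n w t')"
  using qualification_iff_restriction_compl[of "{1..n}"]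
  by (simp add: wq_feasible_iff_wr_feasible wq_optimal_iff_wr_optimal)

end
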